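(* If $\mu\in\mathcal{L}$ is unimodal, then $\mu$ is either a point mass or a Cauchy distribution (i.e. $F_\mu(z)=z+b$ for some $b\in\mathbb{C}$ with $\operatorname{Im} b\ge 0$).
   Context: For a probability measure $\mu$ on $\mathbb{R}$, $G_\mu(z)=\int\frac{d\mu(x)}{z-x}$ and $F_\mu=1/G_\mu$ on the upper half-plane $\mathbb{C}^+$. $\mathcal{L}$ is the set of probability measures $\mu$ on $\mathbb{R}$ with $F_\mu(z+2\pi)=F_\mu(z)+2\pi$ for all $z\in\mathbb{C}^+$. A probability measure $\mu$ is unimodal (with mode $c$) if $d\mu(x)=\mu(\{c\})\delta_c+f(x)\,dx$ with $f$ non-increasing on $[c,\infty)$ and non-decreasing on $(-\infty,c]$. The Cauchy distributions are the measures $\frac{1}{\pi}\frac{t}{(x-a)^2+t^2}dx$, $a\in\mathbb{R}$, $t>0$. *)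

theory Defs
  imports "HOL-Probability.Probability"
begin

definition cauchy_transform :: "real measure \<Rightarrow> complex \<Rightarrow> complex" where
  "cauchy_transform \<mu> z = (\<integral>x. 1 / (z - complex_of_real x) \<partial>\<mu>)"

definition F_transform :: "real measure \<Rightarrow> complex \<Rightarrow> complex" where
  "F_transform \<mu> z = 1 / cauchy_transform \<mu> z"

definition real_prob :: "real measure \<Rightarrow> bool" where
  "real_prob \<mu> \<longleftrightarrow> prob_space \<mu> \<and> sets \<mu> = sets borel"

definition class_L :: "real measure set" where
  "class_L = {\<mu>. real_prob \<mu> \<and>
     (\<forall>z. Im z > 0 \<longrightarrow>
        F_transform \<mu> (z + 2 * complex_of_real pi) = F_transform \<mu> z + 2 * complex_of_real pi)}"

definition unimodal_at :: "real measure \<Rightarrow> real \<Rightarrow> bool" where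
  "unimodal_at \<mu> c \<longleftrightarrow> (\<exists>f :: real \<Rightarrow> real.
     f \<in> borel_measurable borel \<and> (\<forall>x. 0 \<le> f x) \<and>
     (\<forall>x y. c \<le> x \<longrightarrow> x \<le> y \<longrightarrow> f y \<le> f x) \<and>
     (\<forall>x y. x \<le> y \<longrightarrow> y \<le> c \<longrightarrow> f x \<le> f y) \<and>
     (\<forall>A \<in> sets borel. emeasure \<mu> A =
        emeasure \<mu> {c} * indicator A c + (\<integral>\<^sup>+ x. ennreal (f x) * indicator A x \<partial>lborel)))"

definition unimodal :: "real measure \<Rightarrow> bool" where
  "unimodal \<mu> \<longleftrightarrow> (\<exists>c. unimodal_at \<mu> c)"

definition cauchy_distr :: "real \<Rightarrow> real \<Rightarrow> real measure" where
  "cauchy_distr a t = density lborel (\<lambda>x. ennreal (t / (pi * ((x - a)\<^sup>2 + t\<^sup>2))))"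

end

theory Submission
  imports Defs "HOL-Complex_Analysis.Complex_Analysis" "HOL-Real_Asymp.Real_Asymp"
begin

text \<open>
  Let \<open>P(x, y) = - Im G\<^sub>\<mu>(x + iy) / \<pi>\<close> be the Poisson integral of \<open>\<mu>\<close>. Since
  \<open>G\<^sub>\<mu> = 1 / F\<^sub>\<mu>\<close> and \<open>F\<^sub>\<mu>(z + 2\<pi>) = F\<^sub>\<mu>(z) + 2\<pi>\<close>, \<open>P\<close> is known exactly along each lattice
  \<open>s + 2\<pi>\<nat>\<close>, and there \<open>x\<^sup>2 P(x, y) \<longrightarrow> Im F\<^sub>\<mu>(s + iy) / \<pi>\<close>. Split \<open>P(x, y)\<close> according to
  whether the mass lies left or right of \<open>x/2\<close>: the left part contributes \<open>y / \<pi>\<close> to that limit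
  for every \<open>s\<close>, while by unimodality the right part is non-increasing in \<open>x\<close> once \<open>x/2\<close> is beyond
  the mode. Comparing two lattices therefore shows that \<open>Im F\<^sub>\<mu>\<close> is constant on horizontal lines.
  Then \<open>F\<^sub>\<mu>'\<close> is a real-valued holomorphic function, hence constant, and periodicity gives
  \<open>F\<^sub>\<mu>(z) = z + b\<close>. Finally Stieltjes inversion of \<open>G\<^sub>\<mu>(z) = 1 / (z + b)\<close> identifies \<open>\<mu>\<close> as the
  Cauchy distribution with location \<open>- Re b\<close> and scale \<open>Im b\<close> if \<open>Im b > 0\<close>, and as the point
  mass at \<open>- Re b\<close> otherwise.
\<close>

section \<open>The Poisson integral of a measure\<close>

definition poisson_kernel :: "real \<Rightarrow> real \<Rightarrow> real" where
  "poisson_kernel y u = y / (pi * (u\<^sup>2 + y\<^sup>2))"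

definition poisson_integral :: "real measure \<Rightarrow> real \<Rightarrow> real \<Rightarrow> real" where
  "poisson_integral \<mu> y x = (\<integral>t. poisson_kernel y (x - t) \<partial>\<mu>)"

lemma real_prob_imp_real_distribution: "real_prob \<mu> \<Longrightarrow> real_distribution \<mu>"
  unfolding real_prob_def real_distribution_def real_distribution_axioms_def by simp

lemma poisson_kernel_pos: "y > 0 \<Longrightarrow> poisson_kernel y u > 0"
  unfolding poisson_kernel_def by (auto intro!: divide_pos_pos mult_pos_pos add_nonneg_pos)

lemma poisson_kernel_le: "y > 0 \<Longrightarrow> poisson_kernel y u \<le> 1 / (pi * y)"
proof -
  assume y: "y > 0"
  have "y / (pi * (u\<^sup>2 + y\<^sup>2)) \<le> y / (pi * y\<^sup>2)"
    using y by (intro divide_left_mono mult_left_mono) (auto intro!: mult_pos_pos add_nonneg_pos)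
  also have "\<dots> = 1 / (pi * y)" using y by (simp add: power2_eq_square)
  finally show ?thesis unfolding poisson_kernel_def .
qed

lemma borel_measurable_poisson_kernel [measurable]:
  "f \<in> borel_measurable M \<Longrightarrow> (\<lambda>t. poisson_kernel y (f t)) \<in> borel_measurable M"
  unfolding poisson_kernel_def
  by (intro borel_measurable_divide borel_measurable_times borel_measurable_add borel_measurable_power
      measurable_const) auto

lemma Im_one_over_eq_poisson_kernel: "Im (1 / w) = - pi * poisson_kernel (Im w) (Re w)"
  by (simp add: poisson_kernel_def Im_divide power2_eq_square add.commute)

lemma poisson_kernel_tendsto_at_top:
  assumes "y > 0"
  shows "((\<lambda>x. x\<^sup>2 * poisson_kernel y (x + d)) \<longlongrightarrow> y / pi) at_top"
  unfolding poisson_kernel_def using assms by (real_asymp simp: field_simps)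

lemma integrable_poisson_kernel:
  assumes "real_prob \<mu>" "y > 0"
  shows "integrable \<mu> (\<lambda>t. poisson_kernel y (x - t))"
proof -
  interpret real_distribution \<mu> using assms(1) by (rule real_prob_imp_real_distribution)
  show ?thesis
  proof (rule integrable_const_bound[where B="1 / (pi * y)"])
    show "AE t in \<mu>. norm (poisson_kernel y (x - t)) \<le> 1 / (pi * y)"
      using poisson_kernel_pos[OF assms(2)] poisson_kernel_le[OF assms(2)]
      by (intro AE_I2) (simp add: less_imp_le)
    show "(\<lambda>t. poisson_kernel y (x - t)) \<in> borel_measurable \<mu>"
      by measurable
  qed
qed

lemma poisson_integral_pos:
  assumes "real_prob \<mu>" "y > 0"
  shows "poisson_integral \<mu> y x > 0"
proof -
  interpret real_distribution \<mu> using assms(1) by (rule real_prob_imp_real_distribution)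
  have pos: "poisson_kernel y u > 0" for u by (rule poisson_kernel_pos[OF assms(2)])
  have "(\<integral>t. poisson_kernel y (x - t) \<partial>\<mu>) \<noteq> 0"
  proof
    assume "(\<integral>t. poisson_kernel y (x - t) \<partial>\<mu>) = 0"
    then have "AE t in \<mu>. poisson_kernel y (x - t) = 0"
      using integral_nonneg_eq_0_iff_AE[OF integrable_poisson_kernel[OF assms]] pos
      by (auto intro: less_imp_le)
    then show False using pos AE_False by (simp add: less_le)
  qed
  moreover have "(\<integral>t. poisson_kernel y (x - t) \<partial>\<mu>) \<ge> 0"
    using pos by (intro integral_nonneg_AE AE_I2 less_imp_le)
  ultimately show ?thesis unfolding poisson_integral_def by simp
qed

lemma poisson_integral_split:
  assumes "real_prob \<mu>" "y > 0"
  shows "poisson_integral \<mu> y x =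
    (\<integral>t. poisson_kernel y (x - t) * indicator {..<a} t \<partial>\<mu>) +
    (\<integral>t. poisson_kernel y (x - t) * indicator {a..} t \<partial>\<mu>)"
proof -
  interpret real_distribution \<mu> using assms(1) by (rule real_prob_imp_real_distribution)
  have int: "integrable \<mu> (\<lambda>t. poisson_kernel y (x - t) * indicator A t)" if "A \<in> sets borel" for A
    using that by (intro integrable_real_mult_indicator integrable_poisson_kernel assms) auto
  have "poisson_integral \<mu> y x =
      (\<integral>t. poisson_kernel y (x - t) * indicator {..<a} t + poisson_kernel y (x - t) * indicator {a..} t \<partial>\<mu>)"
    unfolding poisson_integral_def by (intro Bochner_Integration.integral_cong) (auto simp: indicator_def)
  also have "\<dots> = (\<integral>t. poisson_kernel y (x - t) * indicator {..<a} t \<partial>\<mu>) +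
      (\<integral>t. poisson_kernel y (x - t) * indicator {a..} t \<partial>\<mu>)"
    by (intro Bochner_Integration.integral_add int) auto
  finally show ?thesis .
qed

section \<open>The Cauchy transform and its reciprocal\<close>

lemma norm_one_over_sub_real_le: "Im z > 0 \<Longrightarrow> norm (1 / (z - complex_of_real x)) \<le> 1 / Im z"
  using abs_Im_le_cmod[of "z - complex_of_real x"] by (simp add: norm_divide frac_le)

lemma integrable_cauchy_kernel:
  assumes "real_prob \<mu>" "Im z > 0"
  shows "integrable \<mu> (\<lambda>x. 1 / (z - complex_of_real x))"
proof -
  interpret real_distribution \<mu> using assms(1) by (rule real_prob_imp_real_distribution)
  show ?thesis
  proof (rule integrable_const_bound[where B="1 / Im z"])
    show "AE x in \<mu>. norm (1 / (z - complex_of_real x)) \<le> 1 / Im z"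
      using norm_one_over_sub_real_le[OF assms(2)] by (intro AE_I2)
    show "(\<lambda>x. 1 / (z - complex_of_real x)) \<in> borel_measurable \<mu>"
      by measurable
  qed
qed

lemma Im_cauchy_transform:
  assumes "real_prob \<mu>" "Im z > 0"
  shows "Im (cauchy_transform \<mu> z) = - pi * poisson_integral \<mu> (Im z) (Re z)"
proof -
  have "Im (cauchy_transform \<mu> z) = (\<integral>x. Im (1 / (z - complex_of_real x)) \<partial>\<mu>)"
    unfolding cauchy_transform_def by (rule integral_Im[symmetric, OF integrable_cauchy_kernel[OF assms]])
  also have "\<dots> = - pi * poisson_integral \<mu> (Im z) (Re z)"
    by (simp add: Im_one_over_eq_poisson_kernel poisson_integral_def)
  finally show ?thesis .
qed

lemma
  assumes "real_prob \<mu>" "Im z > 0"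
  shows cauchy_transform_nonzero: "cauchy_transform \<mu> z \<noteq> 0"
    and Im_F_transform_pos: "Im (F_transform \<mu> z) > 0"
proof -
  have neg: "Im (cauchy_transform \<mu> z) < 0"
    using Im_cauchy_transform[OF assms] poisson_integral_pos[OF assms] by simp
  then show "cauchy_transform \<mu> z \<noteq> 0" by auto
  have "Im (F_transform \<mu> z) = - Im (cauchy_transform \<mu> z) / (cmod (cauchy_transform \<mu> z))\<^sup>2"
    unfolding F_transform_def by (simp add: Im_divide cmod_power2)
  moreover have "(cmod (cauchy_transform \<mu> z))\<^sup>2 > 0" using neg by auto
  ultimately show "Im (F_transform \<mu> z) > 0" using divide_neg_pos[OF neg] by simp
qed

lemma poisson_integral_eq_F_transform:
  assumes "real_prob \<mu>" "y > 0"
  shows "poisson_integral \<mu> y x =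
    poisson_kernel (Im (F_transform \<mu> (Complex x y))) (Re (F_transform \<mu> (Complex x y)))"
proof -
  have z: "Im (Complex x y) > 0" using assms(2) by simp
  have "cauchy_transform \<mu> (Complex x y) = 1 / F_transform \<mu> (Complex x y)"
    using cauchy_transform_nonzero[OF assms(1) z] by (simp add: F_transform_def)
  then show ?thesis
    using Im_cauchy_transform[OF assms(1) z] Im_one_over_eq_poisson_kernel[of "F_transform \<mu> (Complex x y)"]
    by simp
qed

section \<open>Consequences of the periodicity of \<open>F\<^sub>\<mu>\<close>\<close>

lemma class_LD:
  assumes "\<mu> \<in> class_L"
  shows "real_prob \<mu>"
    and "Im z > 0 \<Longrightarrow> F_transform \<mu> (z + 2 * complex_of_real pi) = F_transform \<mu> z + 2 * complex_of_real pi"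
  using assms unfolding class_L_def by auto

lemma F_transform_add_2pi_nat:
  assumes "\<mu> \<in> class_L" "Im z > 0"
  shows "F_transform \<mu> (z + 2 * complex_of_real pi * of_nat n) = F_transform \<mu> z + 2 * complex_of_real pi * of_nat n"
proof (induction n)
  case (Suc n)
  have "F_transform \<mu> (z + 2 * complex_of_real pi * of_nat (Suc n)) =
      F_transform \<mu> ((z + 2 * complex_of_real pi * of_nat n) + 2 * complex_of_real pi)"
    by (simp add: algebra_simps)
  also have "\<dots> = F_transform \<mu> z + 2 * complex_of_real pi * of_nat (Suc n)"
    using class_LD(2)[OF assms(1), of "z + 2 * complex_of_real pi * of_nat n"] assms(2) Suc
    by (simp add: algebra_simps)
  finally show ?case .
qed simp

lemma F_transform_Complex_add_2pi_nat:
  assumes "\<mu> \<in> class_L" "y > 0"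
  shows "F_transform \<mu> (Complex (s + 2 * pi * real n) y) =
    F_transform \<mu> (Complex s y) + complex_of_real (2 * pi * real n)"
proof -
  have "Complex (s + 2 * pi * real n) y = Complex s y + 2 * complex_of_real pi * of_nat n"
    by (simp add: complex_eq_iff)
  then show ?thesis using F_transform_add_2pi_nat[OF assms(1), of "Complex s y" n] assms(2) by simp
qed

lemma poisson_integral_lattice_tendsto:
  assumes "\<mu> \<in> class_L" "y > 0"
  shows "((\<lambda>n. (s + 2 * pi * real n + e)\<^sup>2 * poisson_integral \<mu> y (s + 2 * pi * real n))
          \<longlongrightarrow> Im (F_transform \<mu> (Complex s y)) / pi) sequentially"
proof -
  define w where "w = F_transform \<mu> (Complex s y)"
  have "Im w > 0" unfolding w_def using Im_F_transform_pos[OF class_LD(1)[OF assms(1)]] assms(2) by simp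
  have lattice: "poisson_integral \<mu> y (s + 2 * pi * real n) =
      poisson_kernel (Im w) ((s + 2 * pi * real n + e) + (Re w - s - e))" for n
    using poisson_integral_eq_F_transform[OF class_LD(1)[OF assms(1)] assms(2), of "s + 2 * pi * real n"]
      F_transform_Complex_add_2pi_nat[OF assms, of s n]
    by (simp add: w_def algebra_simps)
  have "filterlim (\<lambda>n. s + 2 * pi * real n + e) at_top sequentially" by real_asymp
  from filterlim_compose[OF poisson_kernel_tendsto_at_top[OF \<open>Im w > 0\<close>, of "Re w - s - e"] this]
  show ?thesis unfolding w_def[symmetric] lattice by simp
qed

lemma poisson_kernel_le_if_gt_half:
  assumes "y > 0" "x > 0" "u > x / 2"
  shows "x\<^sup>2 * poisson_kernel y u \<le> 4 * y / pi"
proof -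
  have "x\<^sup>2 / 4 \<le> u\<^sup>2 + y\<^sup>2"
    using power_mono[of "x / 2" u 2] assms(2,3) by (simp add: power_divide add_increasing2)
  then have "x\<^sup>2 * poisson_kernel y u \<le> x\<^sup>2 * (y / (pi * (x\<^sup>2 / 4)))"
    unfolding poisson_kernel_def using assms
    by (intro mult_left_mono divide_left_mono) (auto intro!: mult_pos_pos add_nonneg_pos)
  also have "\<dots> = 4 * y / pi" using assms(2,3) by (simp add: field_simps)
  finally show ?thesis .
qed

lemma poisson_integral_far_part_tendsto:
  assumes "real_prob \<mu>" "y > 0"
  shows "((\<lambda>x. x\<^sup>2 * (\<integral>t. poisson_kernel y (x + d - t) * indicator {..< x/2 + d} t \<partial>\<mu>))
          \<longlongrightarrow> y / pi) at_top"
proof -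
  interpret real_distribution \<mu> using assms(1) by (rule real_prob_imp_real_distribution)
  have "((\<lambda>x. \<integral>t. x\<^sup>2 * (poisson_kernel y (x + d - t) * indicator {..< x/2 + d} t) \<partial>\<mu>)
          \<longlongrightarrow> (\<integral>t. y / pi \<partial>\<mu>)) at_top"
  proof (rule integral_dominated_convergence_at_top[where w="\<lambda>_. 4 * y / pi"])
    show "AE t in \<mu>. ((\<lambda>x. x\<^sup>2 * (poisson_kernel y (x + d - t) * indicator {..< x/2 + d} t))
            \<longlongrightarrow> y / pi) at_top"
    proof (rule AE_I2)
      fix t
      have "\<forall>\<^sub>F x in at_top. x\<^sup>2 * poisson_kernel y (x + (d - t)) =
          x\<^sup>2 * (poisson_kernel y (x + d - t) * indicator {..< x/2 + d} t)"
        using eventually_gt_at_top[of "2 * (t - d)"] by eventually_elim (auto simp: indicator_def algebra_simps)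
      from Lim_transform_eventually[OF poisson_kernel_tendsto_at_top[OF assms(2)] this]
      show "((\<lambda>x. x\<^sup>2 * (poisson_kernel y (x + d - t) * indicator {..< x/2 + d} t)) \<longlongrightarrow> y / pi) at_top" .
    qed
    show "\<forall>\<^sub>F x in at_top. AE t in \<mu>.
        norm (x\<^sup>2 * (poisson_kernel y (x + d - t) * indicator {..< x/2 + d} t)) \<le> 4 * y / pi"
      using eventually_gt_at_top[of 0]
    proof eventually_elim
      case (elim x)
      show ?case
      proof (rule AE_I2)
        fix t
        show "norm (x\<^sup>2 * (poisson_kernel y (x + d - t) * indicator {..< x/2 + d} t)) \<le> 4 * y / pi"
          using poisson_kernel_le_if_gt_half[OF assms(2) elim, of "x + d - t"]
            poisson_kernel_pos[OF assms(2), of "x + d - t"] assms(2)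
          by (auto simp: indicator_def)
      qed
    qed
  qed simp_all
  then show ?thesis using prob_space by simp
qed

section \<open>Unimodality forces \<open>Im F\<^sub>\<mu>\<close> to be constant on horizontal lines\<close>

lemma nn_integral_atom_plus_density:
  assumes sets: "sets \<mu> = sets borel" and f: "f \<in> borel_measurable borel"
    and decomp: "\<forall>A \<in> sets borel. emeasure \<mu> A =
        emeasure \<mu> {c} * indicator A c + (\<integral>\<^sup>+ x. ennreal (f x) * indicator A x \<partial>lborel)"
    and g: "g \<in> borel_measurable borel"
  shows "(\<integral>\<^sup>+ x. g x \<partial>\<mu>) = emeasure \<mu> {c} * g c + (\<integral>\<^sup>+ x. ennreal (f x) * g x \<partial>lborel)"
  using g
proof (induction rule: borel_measurable_induct)
  case (cong u v)
  then have "u = v" by auto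
  with cong(4) show ?case by simp
next
  case (set A)
  have "(\<integral>\<^sup>+ x. indicator A x \<partial>\<mu>) = emeasure \<mu> A" using set sets by (simp add: nn_integral_indicator)
  also have "\<dots> = emeasure \<mu> {c} * indicator A c + (\<integral>\<^sup>+ x. ennreal (f x) * indicator A x \<partial>lborel)"
    using decomp set by blast
  finally show ?case .
next
  case (mult u k)
  have "(\<integral>\<^sup>+ x. k * u x \<partial>\<mu>) = k * (\<integral>\<^sup>+ x. u x \<partial>\<mu>)"
    using mult(2) sets by (simp add: nn_integral_cmult)
  moreover have "(\<integral>\<^sup>+ x. ennreal (f x) * (k * u x) \<partial>lborel) = k * (\<integral>\<^sup>+ x. ennreal (f x) * u x \<partial>lborel)"
    using mult(2) f by (subst nn_integral_cmult[symmetric]) (auto simp: mult_ac)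
  ultimately show ?case using mult(4) by (simp add: distrib_left mult_ac)
next
  case (add u v)
  have "(\<integral>\<^sup>+ x. v x + u x \<partial>\<mu>) = (\<integral>\<^sup>+ x. v x \<partial>\<mu>) + (\<integral>\<^sup>+ x. u x \<partial>\<mu>)"
    using add sets by (simp add: nn_integral_add)
  moreover have "(\<integral>\<^sup>+ x. ennreal (f x) * (v x + u x) \<partial>lborel) =
      (\<integral>\<^sup>+ x. ennreal (f x) * v x \<partial>lborel) + (\<integral>\<^sup>+ x. ennreal (f x) * u x \<partial>lborel)"
    using add f by (subst nn_integral_add[symmetric]) (auto simp: distrib_left)
  ultimately show ?case using add by (simp add: distrib_left add_ac)
next
  case (seq U)
  have U\<mu>: "U i \<in> borel_measurable \<mu>" for i using seq sets by simp
  have "(\<integral>\<^sup>+ x. (SUP i. U i) x \<partial>\<mu>) = (SUP i. \<integral>\<^sup>+ x. U i x \<partial>\<mu>)"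
    using seq U\<mu> by (simp add: image_comp nn_integral_monotone_convergence_SUP)
  also have "\<dots> = (SUP i. emeasure \<mu> {c} * U i c + (\<integral>\<^sup>+ x. ennreal (f x) * U i x \<partial>lborel))"
    using seq by simp
  also have "\<dots> = (SUP i. emeasure \<mu> {c} * U i c) + (SUP i. \<integral>\<^sup>+ x. ennreal (f x) * U i x \<partial>lborel)"
    using seq by (intro ennreal_SUP_add)
      (auto simp: incseq_def le_fun_def intro!: nn_integral_mono mult_left_mono)
  also have "(SUP i. \<integral>\<^sup>+ x. ennreal (f x) * U i x \<partial>lborel) = (\<integral>\<^sup>+ x. (SUP i. ennreal (f x) * U i x) \<partial>lborel)"
    using seq f by (intro nn_integral_monotone_convergence_SUP[symmetric])
      (auto simp: incseq_def le_fun_def intro: mult_left_mono)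
  finally show ?case by (simp add: SUP_mult_left_ennreal image_comp)
qed

text \<open>Right of the mode the mass has a non-increasing density, so the part of the Poisson integral
  coming from the window \<open>[x - W, \<infinity>)\<close> is non-increasing in \<open>x\<close>.\<close>

lemma nn_integral_poisson_near_part:
  assumes "real_prob \<mu>" and f: "f \<in> borel_measurable borel"
    and decomp: "\<forall>A \<in> sets borel. emeasure \<mu> A =
        emeasure \<mu> {c} * indicator A c + (\<integral>\<^sup>+ x. ennreal (f x) * indicator A x \<partial>lborel)"
    and "c < x - W"
  shows "(\<integral>\<^sup>+ t. ennreal (poisson_kernel y (x - t) * indicator {x - W..} t) \<partial>\<mu>) =
    (\<integral>\<^sup>+ u. ennreal (f (x + u)) * ennreal (poisson_kernel y (- u) * indicator {- W..} u) \<partial>lborel)"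
proof -
  interpret real_distribution \<mu> using assms(1) by (rule real_prob_imp_real_distribution)
  have "(\<integral>\<^sup>+ t. ennreal (poisson_kernel y (x - t) * indicator {x - W..} t) \<partial>\<mu>) =
      emeasure \<mu> {c} * ennreal (poisson_kernel y (x - c) * indicator {x - W..} c) +
      (\<integral>\<^sup>+ t. ennreal (f t) * ennreal (poisson_kernel y (x - t) * indicator {x - W..} t) \<partial>lborel)"
    by (rule nn_integral_atom_plus_density[OF events_eq_borel f decomp]) measurable
  also have "ennreal (poisson_kernel y (x - c) * indicator {x - W..} c) = 0"
    using \<open>c < x - W\<close> by (simp add: indicator_def)
  also have "(\<integral>\<^sup>+ t. ennreal (f t) * ennreal (poisson_kernel y (x - t) * indicator {x - W..} t) \<partial>lborel) =
      (\<integral>\<^sup>+ u. ennreal (f (x + u)) *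
        ennreal (poisson_kernel y (x - (x + u)) * indicator {x - W..} (x + u)) \<partial>lborel)"
    using nn_integral_real_affine[of "\<lambda>t. ennreal (f t) * ennreal (poisson_kernel y (x - t) * indicator {x - W..} t)" 1 x]
      f by simp
  also have "\<dots> = (\<integral>\<^sup>+ u. ennreal (f (x + u)) * ennreal (poisson_kernel y (- u) * indicator {- W..} u) \<partial>lborel)"
    by (intro nn_integral_cong) (auto simp: indicator_def)
  finally show ?thesis by simp
qed

lemma poisson_integral_near_part_antimono:
  assumes "real_prob \<mu>" "unimodal_at \<mu> c" "y > 0" "x2 \<le> x1" "c < x2 - W"
  shows "(\<integral>t. poisson_kernel y (x1 - t) * indicator {x1 - W..} t \<partial>\<mu>) \<le>
    (\<integral>t. poisson_kernel y (x2 - t) * indicator {x2 - W..} t \<partial>\<mu>)"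
proof -
  interpret real_distribution \<mu> using assms(1) by (rule real_prob_imp_real_distribution)
  obtain f where f: "f \<in> borel_measurable borel"
    and dec: "\<forall>x y. c \<le> x \<longrightarrow> x \<le> y \<longrightarrow> f y \<le> f x"
    and decomp: "\<forall>A \<in> sets borel. emeasure \<mu> A =
        emeasure \<mu> {c} * indicator A c + (\<integral>\<^sup>+ x. ennreal (f x) * indicator A x \<partial>lborel)"
    using assms(2) unfolding unimodal_at_def by blast
  define near where "near x = (\<lambda>t. poisson_kernel y (x - t) * indicator {x - W..} t)" for x
  have nonneg: "0 \<le> near x t" for x t
    using poisson_kernel_pos[OF assms(3), of "x - t"] by (simp add: near_def indicator_def)
  have int: "integrable \<mu> (near x)" for x
    unfolding near_def
    by (intro integrable_real_mult_indicator integrable_poisson_kernel assms) auto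
  have "(\<integral>\<^sup>+ t. near x1 t \<partial>\<mu>) =
      (\<integral>\<^sup>+ u. ennreal (f (x1 + u)) * ennreal (poisson_kernel y (- u) * indicator {- W..} u) \<partial>lborel)"
    unfolding near_def using assms by (intro nn_integral_poisson_near_part[OF assms(1) f decomp]) auto
  also have "\<dots> \<le> (\<integral>\<^sup>+ u. ennreal (f (x2 + u)) * ennreal (poisson_kernel y (- u) * indicator {- W..} u) \<partial>lborel)"
    using dec assms(4,5) by (intro nn_integral_mono) (auto simp: indicator_def intro!: mult_right_mono ennreal_leI)
  also have "\<dots> = (\<integral>\<^sup>+ t. near x2 t \<partial>\<mu>)"
    unfolding near_def using assms by (intro nn_integral_poisson_near_part[symmetric, OF assms(1) f decomp]) auto
  finally have "(\<integral>\<^sup>+ t. near x1 t \<partial>\<mu>) \<le> (\<integral>\<^sup>+ t. near x2 t \<partial>\<mu>)" .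
  then have "integral\<^sup>L \<mu> (near x1) \<le> integral\<^sup>L \<mu> (near x2)"
    using int nonneg by (simp add: nn_integral_eq_integral)
  then show ?thesis unfolding near_def .
qed

text \<open>Compare \<open>x\<^sup>2\<close> times the Poisson integral at the lattice points \<open>x = s\<^sub>1 + 2\<pi>n\<close> and \<open>x + s\<^sub>2 - s\<^sub>1\<close>:
  the far parts have the same limit, the near parts are ordered by unimodality.\<close>

lemma Im_F_transform_antimono:
  assumes "\<mu> \<in> class_L" "unimodal_at \<mu> c" "y > 0" "s2 \<le> s1"
  shows "Im (F_transform \<mu> (Complex s1 y)) \<le> Im (F_transform \<mu> (Complex s2 y))"
proof -
  have rp: "real_prob \<mu>" by (rule class_LD(1)[OF assms(1)])
  define d where "d = s2 - s1"
  define X where "X n = s1 + 2 * pi * real n" for n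
  have X: "filterlim X at_top sequentially" unfolding X_def by real_asymp
  have L1: "((\<lambda>n. (X n)\<^sup>2 * poisson_integral \<mu> y (X n)) \<longlongrightarrow> Im (F_transform \<mu> (Complex s1 y)) / pi) sequentially"
    using poisson_integral_lattice_tendsto[OF assms(1,3), of s1 0] by (simp add: X_def)
  have L2: "((\<lambda>n. (X n)\<^sup>2 * poisson_integral \<mu> y (X n + d)) \<longlongrightarrow> Im (F_transform \<mu> (Complex s2 y)) / pi) sequentially"
    using poisson_integral_lattice_tendsto[OF assms(1,3), of s2 "- d"] by (simp add: X_def d_def algebra_simps)
  have L3: "((\<lambda>n. (X n)\<^sup>2 * (\<integral>t. poisson_kernel y (X n - t) * indicator {..< X n / 2} t \<partial>\<mu>)) \<longlongrightarrow> y / pi) sequentially"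
    using filterlim_compose[OF poisson_integral_far_part_tendsto[OF rp assms(3), of 0] X] by simp
  have L4: "((\<lambda>n. (X n)\<^sup>2 * (\<integral>t. poisson_kernel y (X n + d - t) * indicator {..< X n / 2 + d} t \<partial>\<mu>)) \<longlongrightarrow> y / pi) sequentially"
    using filterlim_compose[OF poisson_integral_far_part_tendsto[OF rp assms(3), of d] X] by simp
  have "\<forall>\<^sub>F n in sequentially. c < X n / 2 + d"
    using filterlim_at_top_dense[THEN iffD1, OF X, rule_format, of "2 * (c - d)"] by eventually_elim simp
  then have "\<forall>\<^sub>F n in sequentially.
      (X n)\<^sup>2 * poisson_integral \<mu> y (X n) - (X n)\<^sup>2 * (\<integral>t. poisson_kernel y (X n - t) * indicator {..< X n / 2} t \<partial>\<mu>) \<le>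
      (X n)\<^sup>2 * poisson_integral \<mu> y (X n + d) - (X n)\<^sup>2 * (\<integral>t. poisson_kernel y (X n + d - t) * indicator {..< X n / 2 + d} t \<partial>\<mu>)"
  proof eventually_elim
    case (elim n)
    have "(\<integral>t. poisson_kernel y (X n - t) * indicator {X n - X n / 2..} t \<partial>\<mu>) \<le>
        (\<integral>t. poisson_kernel y (X n + d - t) * indicator {X n + d - X n / 2..} t \<partial>\<mu>)"
      using elim assms(4) by (intro poisson_integral_near_part_antimono[OF rp assms(2,3)]) (auto simp: d_def)
    then show ?case
      using poisson_integral_split[OF rp assms(3), of "X n" "X n / 2"]
        poisson_integral_split[OF rp assms(3), of "X n + d" "X n / 2 + d"]
      by (simp add: algebra_simps mult_left_mono)
  qed
  from tendsto_le[OF trivial_limit_sequentially tendsto_diff[OF L2 L4] tendsto_diff[OF L1 L3] this]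
  show ?thesis by (simp add: divide_le_cancel)
qed

lemma Im_F_transform_horizontal_invariant:
  assumes "\<mu> \<in> class_L" "unimodal_at \<mu> c" "Im z > 0"
  shows "Im (F_transform \<mu> (z + complex_of_real h)) = Im (F_transform \<mu> z)"
proof -
  have le: "Im (F_transform \<mu> (Complex s (Im z))) \<le> Im (F_transform \<mu> (Complex s' (Im z)))" for s s'
  proof -
    obtain n :: nat where "(s' - s) / (2 * pi) \<le> real n" using real_arch_simple by blast
    then have "s' \<le> s + 2 * pi * real n" by (simp add: pos_divide_le_eq mult.commute)
    then have "Im (F_transform \<mu> (Complex (s + 2 * pi * real n) (Im z))) \<le> Im (F_transform \<mu> (Complex s' (Im z)))"
      by (rule Im_F_transform_antimono[OF assms(1,2,3)])
    then show ?thesis using F_transform_Complex_add_2pi_nat[OF assms(1,3), of s n] by simp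
  qed
  have "z + complex_of_real h = Complex (Re z + h) (Im z)" "z = Complex (Re z) (Im z)"
    by (simp_all add: complex_eq_iff)
  then show ?thesis using le[of "Re z + h" "Re z"] le[of "Re z" "Re z + h"] by (metis order_antisym)
qed

section \<open>A horizontally invariant \<open>Im F\<^sub>\<mu>\<close> forces \<open>F\<^sub>\<mu>(z) = z + b\<close>\<close>

lemma cauchy_transform_diff_quotient:
  assumes "real_prob \<mu>" "Im z > 0" "Im w > 0" "w \<noteq> z"
  shows "(cauchy_transform \<mu> w - cauchy_transform \<mu> z) / (w - z) =
    (\<integral>x. - 1 / ((w - complex_of_real x) * (z - complex_of_real x)) \<partial>\<mu>)"
proof -
  have "cauchy_transform \<mu> w - cauchy_transform \<mu> z =
      (\<integral>x. 1 / (w - complex_of_real x) - 1 / (z - complex_of_real x) \<partial>\<mu>)"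
    unfolding cauchy_transform_def using assms
    by (intro Bochner_Integration.integral_diff[symmetric] integrable_cauchy_kernel)
  also have "\<dots> = (\<integral>x. (w - z) * (- 1 / ((w - complex_of_real x) * (z - complex_of_real x))) \<partial>\<mu>)"
  proof (intro Bochner_Integration.integral_cong refl)
    fix x
    have "w - complex_of_real x \<noteq> 0" "z - complex_of_real x \<noteq> 0"
      using assms(2,3) by (auto simp: complex_eq_iff)
    then show "1 / (w - complex_of_real x) - 1 / (z - complex_of_real x) =
        (w - z) * (- 1 / ((w - complex_of_real x) * (z - complex_of_real x)))"
      by (simp add: field_simps) (metis minus_diff_eq minus_divide_left)
  qed
  also have "\<dots> = (w - z) * (\<integral>x. - 1 / ((w - complex_of_real x) * (z - complex_of_real x)) \<partial>\<mu>)"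
    by (rule integral_mult_right_zero)
  finally show ?thesis using assms(4) by simp
qed

lemma cauchy_transform_has_field_derivative:
  assumes "real_prob \<mu>" "Im z > 0"
  shows "(cauchy_transform \<mu> has_field_derivative (\<integral>x. - 1 / (z - complex_of_real x)\<^sup>2 \<partial>\<mu>)) (at z)"
proof -
  interpret real_distribution \<mu> using assms(1) by (rule real_prob_imp_real_distribution)
  define r where "r = Im z / 2"
  have r: "r > 0" using assms(2) by (simp add: r_def)
  have Im_ball: "Im w > r" if "w \<in> ball z r" for w
    using that abs_Im_le_cmod[of "z - w"] by (simp add: dist_norm r_def)
  have "((\<lambda>w. (cauchy_transform \<mu> w - cauchy_transform \<mu> z) / (w - z)) \<longlongrightarrow>
      (\<integral>x. - 1 / (z - complex_of_real x)\<^sup>2 \<partial>\<mu>)) (at z within ball z r)"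
    unfolding tendsto_at_iff_sequentially
  proof (intro allI impI)
    fix X :: "nat \<Rightarrow> complex"
    assume X: "\<forall>i. X i \<in> ball z r - {z}" and "X \<longlonglongrightarrow> z"
    have "(\<lambda>i. \<integral>x. - 1 / ((X i - complex_of_real x) * (z - complex_of_real x)) \<partial>\<mu>) \<longlonglongrightarrow>
        (\<integral>x. - 1 / (z - complex_of_real x)\<^sup>2 \<partial>\<mu>)"
    proof (rule integral_dominated_convergence[where w="\<lambda>_. 1 / (r * Im z)"])
      show "AE x in \<mu>. (\<lambda>i. - 1 / ((X i - complex_of_real x) * (z - complex_of_real x))) \<longlonglongrightarrow>
          - 1 / (z - complex_of_real x)\<^sup>2"
      proof (rule AE_I2)
        fix x
        have "z - complex_of_real x \<noteq> 0" using assms(2) by (auto simp: complex_eq_iff)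
        then have "(\<lambda>i. - 1 / ((X i - complex_of_real x) * (z - complex_of_real x))) \<longlonglongrightarrow>
            - 1 / ((z - complex_of_real x) * (z - complex_of_real x))"
          using \<open>X \<longlonglongrightarrow> z\<close> by (intro tendsto_intros) auto
        then show "(\<lambda>i. - 1 / ((X i - complex_of_real x) * (z - complex_of_real x))) \<longlonglongrightarrow>
            - 1 / (z - complex_of_real x)\<^sup>2"
          by (simp add: power2_eq_square)
      qed
      show "AE x in \<mu>. norm (- 1 / ((X i - complex_of_real x) * (z - complex_of_real x))) \<le> 1 / (r * Im z)"
        for i
      proof (rule AE_I2)
        fix x
        have "Im (X i) > r" using Im_ball[of "X i"] X by auto
        then have "norm (1 / (X i - complex_of_real x)) \<le> 1 / r"
          using norm_one_over_sub_real_le[of "X i" x] r frac_le[of 1 1 r "Im (X i)"] by auto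
        then have "norm (1 / (X i - complex_of_real x)) * norm (1 / (z - complex_of_real x)) \<le> 1 / r * (1 / Im z)"
          using norm_one_over_sub_real_le[OF assms(2), of x] r by (intro mult_mono) auto
        then show "norm (- 1 / ((X i - complex_of_real x) * (z - complex_of_real x))) \<le> 1 / (r * Im z)"
          by (simp add: norm_divide norm_mult)
      qed
    qed simp_all
    moreover have "Im (X i) > 0" for i using Im_ball[of "X i"] X r by auto
    ultimately show "((\<lambda>w. (cauchy_transform \<mu> w - cauchy_transform \<mu> z) / (w - z)) \<circ> X) \<longlonglongrightarrow>
        (\<integral>x. - 1 / (z - complex_of_real x)\<^sup>2 \<partial>\<mu>)"
      using X cauchy_transform_diff_quotient[OF assms] by (simp add: o_def)
  qed
  moreover have "at z within ball z r = at z" using r by (intro at_within_open) auto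
  ultimately show ?thesis unfolding has_field_derivative_iff by simp
qed

lemma F_transform_holomorphic:
  assumes "real_prob \<mu>"
  shows "F_transform \<mu> holomorphic_on {z. Im z > 0}"
proof -
  have "cauchy_transform \<mu> holomorphic_on {z. Im z > 0}"
    using cauchy_transform_has_field_derivative[OF assms]
    by (auto simp: holomorphic_on_open open_halfspace_Im_gt)
  then have "(\<lambda>z. 1 / cauchy_transform \<mu> z) holomorphic_on {z. Im z > 0}"
    using cauchy_transform_nonzero[OF assms] by (intro holomorphic_intros) auto
  then show ?thesis by (simp add: F_transform_def[abs_def])
qed

lemma Im_deriv_eq_0_if_Im_horizontally_invariant:
  fixes g :: "complex \<Rightarrow> complex"
  assumes "(g has_field_derivative D) (at z)" "\<And>h. Im (g (z + complex_of_real h)) = Im (g z)"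
  shows "Im D = 0"
proof -
  have "((\<lambda>h::real. z + complex_of_real h) has_vector_derivative 1) (at 0)"
    by (auto intro!: derivative_eq_intros)
  moreover have "(g has_field_derivative D) (at ((\<lambda>h::real. z + complex_of_real h) 0))"
    using assms(1) by simp
  ultimately have "((g \<circ> (\<lambda>h::real. z + complex_of_real h)) has_vector_derivative 1 * D) (at 0)"
    by (rule field_vector_diff_chain_at)
  from has_field_derivative_Im[OF this]
  have "((\<lambda>h. Im (g (z + complex_of_real h))) has_field_derivative Im D) (at 0)"
    by (simp add: o_def)
  moreover have "((\<lambda>h. Im (g (z + complex_of_real h))) has_field_derivative 0) (at 0)"
    using assms(2) by simp
  ultimately show ?thesis by (rule DERIV_unique)
qed

text \<open>An open subset of \<open>\<complex>\<close> cannot lie on the real axis, so by the open mapping theorem a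
  real-valued holomorphic function on a region is constant.\<close>

lemma holomorphic_real_valued_constant_on:
  assumes "f holomorphic_on S" "open S" "connected S" "\<And>z. z \<in> S \<Longrightarrow> Im (f z) = 0"
  shows "f constant_on S"
proof (rule ccontr)
  assume nonconst: "\<not> f constant_on S"
  then obtain z where "z \<in> S" by (auto simp: constant_on_def)
  have "open (f ` S)" using open_mapping_thm[OF assms(1-3) assms(2) order_refl nonconst] .
  then obtain e where "e > 0" "ball (f z) e \<subseteq> f ` S"
    using \<open>z \<in> S\<close> by (auto simp: open_contains_ball)
  moreover have "f z + \<i> * complex_of_real (e / 2) \<in> ball (f z) e"
    using \<open>e > 0\<close> by (simp add: dist_norm norm_mult)
  ultimately obtain w where "w \<in> S" "f w = f z + \<i> * complex_of_real (e / 2)" by auto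
  then show False using assms(4)[of w] assms(4)[OF \<open>z \<in> S\<close>] \<open>e > 0\<close> by simp
qed

lemma F_transform_eq_add_const:
  assumes "\<mu> \<in> class_L" and horizontal: "\<And>z h. Im z > 0 \<Longrightarrow> Im (F_transform \<mu> (z + complex_of_real h)) = Im (F_transform \<mu> z)"
  obtains b where "\<And>z. Im z > 0 \<Longrightarrow> F_transform \<mu> z = z + b"
proof -
  define H where "H = {z. Im z > 0}"
  have H: "open H" "convex H" "connected H"
    unfolding H_def by (auto intro: open_halfspace_Im_gt convex_halfspace_Im_gt convex_connected)
  have hol: "F_transform \<mu> holomorphic_on H"
    unfolding H_def by (rule F_transform_holomorphic[OF class_LD(1)[OF assms(1)]])
  have dF: "(F_transform \<mu> has_field_derivative deriv (F_transform \<mu>) z) (at z)" if "z \<in> H" for z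
    by (rule holomorphic_derivI[OF hol H(1) that])
  have "Im (deriv (F_transform \<mu>) z) = 0" if "z \<in> H" for z
    using that horizontal by (intro Im_deriv_eq_0_if_Im_horizontally_invariant[OF dF[OF that]]) (simp add: H_def)
  then have "deriv (F_transform \<mu>) constant_on H"
    using H by (intro holomorphic_real_valued_constant_on holomorphic_deriv hol)
  then obtain k where k: "\<And>z. z \<in> H \<Longrightarrow> deriv (F_transform \<mu>) z = k"
    by (auto simp: constant_on_def)
  have "\<exists>b. \<forall>z\<in>H. F_transform \<mu> z - k * z = b"
  proof (rule has_field_derivative_zero_constant[OF H(2)])
    fix z assume "z \<in> H"
    then have "((\<lambda>w. F_transform \<mu> w - k * w) has_field_derivative 0) (at z)"
      using dF[of z] k[of z] by (auto intro!: derivative_eq_intros)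
    then show "((\<lambda>w. F_transform \<mu> w - k * w) has_field_derivative 0) (at z within H)"
      by (rule has_field_derivative_at_within)
  qed
  then obtain b where b: "\<And>z. z \<in> H \<Longrightarrow> F_transform \<mu> z = k * z + b" by (metis diff_eq_eq add.commute)
  have "k * (\<i> + 2 * complex_of_real pi) + b = (k * \<i> + b) + 2 * complex_of_real pi"
    using class_LD(2)[OF assms(1), of \<i>] b[of \<i>] b[of "\<i> + 2 * complex_of_real pi"] by (simp add: H_def)
  then have "k = 1" by (simp add: algebra_simps)
  with b show ?thesis using that by (simp add: H_def)
qed

section \<open>Stieltjes inversion\<close>

definition cauchy_interval_prob :: "real \<Rightarrow> real \<Rightarrow> real \<Rightarrow> real \<Rightarrow> real" where
  "cauchy_interval_prob m s a c = (arctan ((c - m) / s) - arctan ((a - m) / s)) / pi"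

definition stieltjes_indicator :: "real \<Rightarrow> real \<Rightarrow> real \<Rightarrow> real" where
  "stieltjes_indicator a c t = (if a < t \<and> t < c then 1 else if t = a \<or> t = c then 1 / 2 else 0)"

definition stieltjes_mass :: "real measure \<Rightarrow> real \<Rightarrow> real \<Rightarrow> real" where
  "stieltjes_mass \<mu> a c = measure \<mu> {a<..<c} + measure \<mu> {a} / 2 + measure \<mu> {c} / 2"

lemma cauchy_interval_prob_nonneg: "s > 0 \<Longrightarrow> a \<le> c \<Longrightarrow> 0 \<le> cauchy_interval_prob m s a c"
  unfolding cauchy_interval_prob_def by (auto intro!: divide_nonneg_pos arctan_monotone' divide_right_mono)

lemma cauchy_interval_prob_le_1: "cauchy_interval_prob m s a c \<le> 1"
  using arctan_ubound[of "(c - m) / s"] arctan_lbound[of "(a - m) / s"]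
  unfolding cauchy_interval_prob_def by (simp add: divide_le_eq)

lemma nn_integral_poisson_kernel_Icc:
  assumes "s > 0" "a \<le> c"
  shows "(\<integral>\<^sup>+x. ennreal (poisson_kernel s (x - m)) * indicator {a..c} x \<partial>lborel) =
    ennreal (cauchy_interval_prob m s a c)"
proof -
  have "((\<lambda>x. arctan ((x - m) / s) / pi) has_real_derivative poisson_kernel s (x - m)) (at x)" for x
  proof -
    have "1 + ((x - m) / s)\<^sup>2 = ((x - m)\<^sup>2 + s\<^sup>2) / s\<^sup>2"
      using assms(1) by (simp add: field_simps)
    then have "inverse (1 + ((x - m) / s)\<^sup>2) * (1 / s) / pi = poisson_kernel s (x - m)"
      using assms(1) unfolding poisson_kernel_def by (simp add: power2_eq_square field_simps)
    then show ?thesis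
      using assms(1) by (auto intro!: derivative_eq_intros DERIV_arctan[THEN DERIV_chain2])
  qed
  then have "(\<integral>\<^sup>+x. ennreal (poisson_kernel s (x - m)) * indicator {a..c} x \<partial>lborel) =
      ennreal (arctan ((c - m) / s) / pi - arctan ((a - m) / s) / pi)"
    using poisson_kernel_pos[OF assms(1)] assms(2) by (intro nn_integral_FTC_Icc) (auto intro: less_imp_le)
  then show ?thesis unfolding cauchy_interval_prob_def by (simp add: diff_divide_distrib)
qed

lemma nn_integral_poisson_integral_Icc:
  assumes "real_prob \<mu>" "y > 0" "a \<le> c"
  shows "(\<integral>\<^sup>+x. ennreal (poisson_integral \<mu> y x) * indicator {a..c} x \<partial>lborel) =
    ennreal (\<integral>t. cauchy_interval_prob t y a c \<partial>\<mu>)"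
proof -
  interpret real_distribution \<mu> using assms(1) by (rule real_prob_imp_real_distribution)
  interpret pair_sigma_finite \<mu> lborel
    by (simp add: pair_sigma_finite_def prob_space_imp_sigma_finite[OF prob_space_axioms]
        lborel.sigma_finite_measure_axioms)
  have "ennreal (poisson_integral \<mu> y x) * indicator {a..c} x =
      (\<integral>\<^sup>+t. ennreal (poisson_kernel y (x - t)) * indicator {a..c} x \<partial>\<mu>)" for x
  proof -
    have "ennreal (poisson_integral \<mu> y x) = (\<integral>\<^sup>+t. ennreal (poisson_kernel y (x - t)) \<partial>\<mu>)"
      unfolding poisson_integral_def using poisson_kernel_pos[OF assms(2)]
      by (intro nn_integral_eq_integral[symmetric] integrable_poisson_kernel assms) (auto intro: less_imp_le)
    moreover have "(\<lambda>t. ennreal (poisson_kernel y (x - t))) \<in> borel_measurable \<mu>"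
      by measurable
    ultimately show ?thesis by (simp add: nn_integral_multc)
  qed
  then have "(\<integral>\<^sup>+x. ennreal (poisson_integral \<mu> y x) * indicator {a..c} x \<partial>lborel) =
      (\<integral>\<^sup>+x. (\<integral>\<^sup>+t. ennreal (poisson_kernel y (x - t)) * indicator {a..c} x \<partial>\<mu>) \<partial>lborel)"
    by (rule nn_integral_cong)
  also have "\<dots> = (\<integral>\<^sup>+t. (\<integral>\<^sup>+x. ennreal (poisson_kernel y (x - t)) * indicator {a..c} x \<partial>lborel) \<partial>\<mu>)"
  proof (rule Fubini')
    show "(\<lambda>(t, x). ennreal (poisson_kernel y (x - t)) * indicator {a..c} x) \<in> borel_measurable (\<mu> \<Otimes>\<^sub>M lborel)"
      unfolding measurable_cong_sets[OF sets_pair_measure_cong[OF events_eq_borel refl] refl] by measurable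
  qed
  also have "\<dots> = (\<integral>\<^sup>+t. ennreal (cauchy_interval_prob t y a c) \<partial>\<mu>)"
    by (intro nn_integral_cong nn_integral_poisson_kernel_Icc assms)
  also have "\<dots> = ennreal (\<integral>t. cauchy_interval_prob t y a c \<partial>\<mu>)"
  proof (intro nn_integral_eq_integral AE_I2 cauchy_interval_prob_nonneg assms)
    show "integrable \<mu> (\<lambda>t. cauchy_interval_prob t y a c)"
    proof (rule integrable_const_bound[where B=1])
      show "AE t in \<mu>. norm (cauchy_interval_prob t y a c) \<le> 1"
        using cauchy_interval_prob_nonneg[OF assms(2,3)] cauchy_interval_prob_le_1 by (intro AE_I2) simp
      show "(\<lambda>t. cauchy_interval_prob t y a c) \<in> borel_measurable \<mu>"
        unfolding cauchy_interval_prob_def by measurable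
    qed
  qed
  finally show ?thesis .
qed

lemma cauchy_interval_prob_tendsto_stieltjes_indicator:
  assumes "a < c"
  shows "(\<lambda>n. cauchy_interval_prob t (1 / (real n + 1)) a c) \<longlonglongrightarrow> stieltjes_indicator a c t"
proof -
  have arctan_lim: "(\<lambda>n. arctan (u / (1 / (real n + 1)))) \<longlonglongrightarrow> pi / 2 * sgn u" for u
  proof -
    consider "u > 0" | "u < 0" | "u = 0" by linarith
    then show ?thesis
    proof cases
      case 1
      then have "filterlim (\<lambda>n. u / (1 / (real n + 1))) at_top sequentially" by real_asymp
      then show ?thesis using 1 by (simp add: filterlim_compose[OF tendsto_arctan_at_top])
    next
      case 2
      then have "filterlim (\<lambda>n. u / (1 / (real n + 1))) at_bot sequentially" by real_asymp
      then show ?thesis using 2 by (simp add: filterlim_compose[OF tendsto_arctan_at_bot])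
    qed simp
  qed
  have "(\<lambda>n. cauchy_interval_prob t (1 / (real n + 1)) a c) \<longlonglongrightarrow> (pi / 2 * sgn (c - t) - pi / 2 * sgn (a - t)) / pi"
    unfolding cauchy_interval_prob_def by (intro tendsto_intros arctan_lim) simp
  moreover have "(pi / 2 * sgn (c - t) - pi / 2 * sgn (a - t)) / pi = stieltjes_indicator a c t"
    using assms unfolding stieltjes_indicator_def by (auto simp: sgn_if)
  ultimately show ?thesis by simp
qed

lemma integral_stieltjes_indicator:
  assumes "real_prob \<mu>" "a < c"
  shows "(\<integral>t. stieltjes_indicator a c t \<partial>\<mu>) = stieltjes_mass \<mu> a c"
proof -
  interpret real_distribution \<mu> using assms(1) by (rule real_prob_imp_real_distribution)
  have "stieltjes_indicator a c t =
      indicator {a<..<c} t + indicator {a} t / (2::real) + indicator {c} t / (2::real)" for t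
    using assms(2) unfolding stieltjes_indicator_def by (auto simp: indicator_def)
  moreover have "integrable \<mu> (indicator A :: real \<Rightarrow> real)" if "A \<in> sets borel" for A
    using that by (simp add: integrable_indicator_iff emeasure_eq_measure)
  ultimately show ?thesis
    unfolding stieltjes_mass_def by simp
qed

text \<open>By \<open>nn_integral_poisson_integral_Icc\<close> the sequence is \<open>\<integral>\<^sub>a\<^sup>c P(x, 1/(n+1)) dx\<close>, so this is the
  Stieltjes inversion formula.\<close>

theorem stieltjes_inversion:
  assumes "real_prob \<mu>" "a < c"
  shows "(\<lambda>n. \<integral>t. cauchy_interval_prob t (1 / (real n + 1)) a c \<partial>\<mu>) \<longlonglongrightarrow> stieltjes_mass \<mu> a c"
proof -
  interpret real_distribution \<mu> using assms(1) by (rule real_prob_imp_real_distribution)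
  have "(\<lambda>n. \<integral>t. cauchy_interval_prob t (1 / (real n + 1)) a c \<partial>\<mu>) \<longlonglongrightarrow> (\<integral>t. stieltjes_indicator a c t \<partial>\<mu>)"
  proof (rule integral_dominated_convergence[where w="\<lambda>_. 1"])
    show "AE t in \<mu>. norm (cauchy_interval_prob t (1 / (real n + 1)) a c) \<le> 1" for n
      using cauchy_interval_prob_nonneg[of "1 / (real n + 1)" a c] cauchy_interval_prob_le_1 assms(2)
      by (intro AE_I2) simp
    show "AE t in \<mu>. (\<lambda>n. cauchy_interval_prob t (1 / (real n + 1)) a c) \<longlonglongrightarrow> stieltjes_indicator a c t"
      by (intro AE_I2 cauchy_interval_prob_tendsto_stieltjes_indicator assms(2))
    show "(\<lambda>t. cauchy_interval_prob t (1 / (real n + 1)) a c) \<in> borel_measurable \<mu>" for n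
      unfolding cauchy_interval_prob_def by measurable
    show "stieltjes_indicator a c \<in> borel_measurable \<mu>"
      unfolding stieltjes_indicator_def by measurable
  qed simp
  then show ?thesis using integral_stieltjes_indicator[OF assms] by simp
qed

section \<open>Measures with \<open>F\<^sub>\<mu>(z) = z + b\<close>\<close>

lemma Im_nonneg_if_F_transform_eq_add:
  assumes "real_prob \<mu>" "\<And>z. Im z > 0 \<Longrightarrow> F_transform \<mu> z = z + b"
  shows "Im b \<ge> 0"
proof (rule ccontr)
  assume "\<not> Im b \<ge> 0"
  then have z: "Im (Complex 0 (- Im b / 2)) > 0" by simp
  from Im_F_transform_pos[OF assms(1) z] assms(2)[OF z] \<open>\<not> Im b \<ge> 0\<close> show False by simp
qed

lemma poisson_integral_if_F_transform_eq_add: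
  assumes "real_prob \<mu>" "\<And>z. Im z > 0 \<Longrightarrow> F_transform \<mu> z = z + b" "y > 0"
  shows "poisson_integral \<mu> y x = poisson_kernel (y + Im b) (x - (- Re b))"
  using poisson_integral_eq_F_transform[OF assms(1,3), of x] assms(2)[of "Complex x y"] assms(3) by simp

lemma stieltjes_mass_if_F_transform_eq_add:
  assumes "real_prob \<mu>" "\<And>z. Im z > 0 \<Longrightarrow> F_transform \<mu> z = z + b" "a < c"
  shows "stieltjes_mass \<mu> a c =
    (if Im b > 0 then cauchy_interval_prob (- Re b) (Im b) a c else stieltjes_indicator a c (- Re b))"
proof -
  have Im_b: "Im b \<ge> 0" by (rule Im_nonneg_if_F_transform_eq_add[OF assms(1,2)])
  have smoothed: "(\<integral>t. cauchy_interval_prob t y a c \<partial>\<mu>) = cauchy_interval_prob (- Re b) (y + Im b) a c"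
    if "y > 0" for y
  proof -
    have "ennreal (\<integral>t. cauchy_interval_prob t y a c \<partial>\<mu>) =
        (\<integral>\<^sup>+x. ennreal (poisson_kernel (y + Im b) (x - (- Re b))) * indicator {a..c} x \<partial>lborel)"
      using nn_integral_poisson_integral_Icc[OF assms(1) that, of a c] assms(3)
        poisson_integral_if_F_transform_eq_add[OF assms(1,2) that] by simp
    also have "\<dots> = ennreal (cauchy_interval_prob (- Re b) (y + Im b) a c)"
      using that Im_b assms(3) by (intro nn_integral_poisson_kernel_Icc) auto
    finally show ?thesis
      using that Im_b assms(3)
      by (subst (asm) ennreal_inj) (auto intro!: integral_nonneg_AE AE_I2 cauchy_interval_prob_nonneg)
  qed
  have "(\<lambda>n. cauchy_interval_prob (- Re b) (1 / (real n + 1) + Im b) a c) \<longlonglongrightarrow>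
      (if Im b > 0 then cauchy_interval_prob (- Re b) (Im b) a c else stieltjes_indicator a c (- Re b))"
  proof (cases "Im b > 0")
    case True
    have "(\<lambda>n. 1 / (real n + 1)) \<longlonglongrightarrow> 0" by real_asymp
    then have "(\<lambda>n. cauchy_interval_prob (- Re b) (1 / (real n + 1) + Im b) a c) \<longlonglongrightarrow>
        cauchy_interval_prob (- Re b) (0 + Im b) a c"
      unfolding cauchy_interval_prob_def using True by (intro tendsto_intros) auto
    then show ?thesis using True by simp
  next
    case False
    then show ?thesis
      using Im_b cauchy_interval_prob_tendsto_stieltjes_indicator[OF assms(3), of "- Re b"] by simp
  qed
  moreover have "(\<lambda>n. cauchy_interval_prob (- Re b) (1 / (real n + 1) + Im b) a c) \<longlonglongrightarrow> stieltjes_mass \<mu> a c"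
    using stieltjes_inversion[OF assms(1,3)] smoothed by simp
  ultimately show ?thesis by (rule LIMSEQ_unique[rotated])
qed

lemma emeasure_cauchy_distr_Ioc:
  assumes "t > 0" "a \<le> c"
  shows "emeasure (cauchy_distr m t) {a<..c} = ennreal (cauchy_interval_prob m t a c)"
proof -
  have "emeasure (cauchy_distr m t) {a<..c} =
      (\<integral>\<^sup>+ x. ennreal (t / (pi * ((x - m)\<^sup>2 + t\<^sup>2))) * indicator {a<..c} x \<partial>lborel)"
    unfolding cauchy_distr_def by (rule emeasure_density) auto
  also have "\<dots> = (\<integral>\<^sup>+ x. ennreal (poisson_kernel t (x - m)) * indicator {a..c} x \<partial>lborel)"
    by (intro nn_integral_cong_AE, use AE_lborel_singleton[of a] in eventually_elim)
       (auto simp: poisson_kernel_def indicator_def)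
  also have "\<dots> = ennreal (cauchy_interval_prob m t a c)" by (rule nn_integral_poisson_kernel_Icc[OF assms])
  finally show ?thesis .
qed

lemma real_prob_eq_cauchy_distr:
  assumes "real_prob \<mu>" "t > 0" and mass: "\<And>a c. a < c \<Longrightarrow> stieltjes_mass \<mu> a c = cauchy_interval_prob m t a c"
  shows "\<mu> = cauchy_distr m t"
proof -
  interpret real_distribution \<mu> using assms(1) by (rule real_prob_imp_real_distribution)
  have no_atom: "measure \<mu> {a} = 0" for a
  proof -
    have "((\<lambda>e. cauchy_interval_prob m t (a - e) (a + e)) \<longlongrightarrow> cauchy_interval_prob m t (a - 0) (a + 0)) (at_right 0)"
      unfolding cauchy_interval_prob_def using assms(2) by (intro tendsto_intros) auto
    moreover have "\<forall>\<^sub>F e in at_right 0. measure \<mu> {a} \<le> cauchy_interval_prob m t (a - e) (a + e)"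
      using eventually_at_right_less[of 0]
    proof eventually_elim
      case (elim e)
      have "measure \<mu> {a} \<le> measure \<mu> {a - e<..<a + e}"
        using elim by (intro finite_measure_mono) auto
      also have "\<dots> \<le> stieltjes_mass \<mu> (a - e) (a + e)" unfolding stieltjes_mass_def by simp
      finally show ?case using mass[of "a - e" "a + e"] elim by simp
    qed
    ultimately have "measure \<mu> {a} \<le> 0"
      by (intro tendsto_lowerbound) (auto simp: cauchy_interval_prob_def)
    then show ?thesis using measure_nonneg[of \<mu> "{a}"] by linarith
  qed
  have Ioc: "emeasure \<mu> {a<..c} = ennreal (cauchy_interval_prob m t a c)" if "a < c" for a c
  proof -
    have "{a<..c} = {a<..<c} \<union> {c}" using that by auto
    moreover have "measure \<mu> ({a<..<c} \<union> {c}) = measure \<mu> {a<..<c} + measure \<mu> {c}"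
      by (intro finite_measure_Union) auto
    ultimately have "measure \<mu> {a<..c} = measure \<mu> {a<..<c}" using no_atom[of c] by simp
    also have "\<dots> = cauchy_interval_prob m t a c"
      using mass[OF that] no_atom unfolding stieltjes_mass_def by simp
    finally show ?thesis by (simp add: emeasure_eq_measure)
  qed
  show ?thesis
  proof (rule measure_eqI_generator_eq[where \<Omega>=UNIV and A="\<lambda>i. {- real i<..real i}"])
    fix X assume "X \<in> range (\<lambda>(a, c). {a<..c::real})"
    then obtain a c where X: "X = {a<..c}" by auto
    show "emeasure \<mu> X = emeasure (cauchy_distr m t) X"
      unfolding X using Ioc emeasure_cauchy_distr_Ioc[OF assms(2)] by (cases "a < c") auto
  next
    show "(\<Union>i. {- real i<..real i}) = UNIV" by (rule UN_Ioc_eq_UNIV)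
  qed (auto simp: cauchy_distr_def borel_sigma_sets_Ioc Int_stable_def emeasure_eq_measure)
qed

lemma real_prob_eq_return_if_measure_singleton:
  assumes "real_prob \<mu>" "measure \<mu> {m} = 1"
  shows "\<mu> = return borel m"
proof -
  interpret real_distribution \<mu> using assms(1) by (rule real_prob_imp_real_distribution)
  have "AE x in \<mu>. x \<in> {m}" using prob_eq_1[of "{m}"] assms(2) by simp
  show ?thesis
  proof (rule measure_eqI)
    fix B assume B: "B \<in> sets \<mu>"
    have "AE x in \<mu>. x \<in> B \<longleftrightarrow> x \<in> B \<inter> {m}"
      using \<open>AE x in \<mu>. x \<in> {m}\<close> by eventually_elim auto
    then have "emeasure \<mu> B = emeasure \<mu> (B \<inter> {m})"
      using B by (intro emeasure_eq_AE) auto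
    also have "\<dots> = indicator B m"
    proof (cases "m \<in> B")
      case True
      then have "B \<inter> {m} = {m}" by auto
      then show ?thesis using True assms(2) by (simp add: emeasure_eq_measure)
    qed simp
    finally show "emeasure \<mu> B = emeasure (return borel m) B" using B by simp
  qed simp
qed

lemma real_prob_eq_return:
  assumes "real_prob \<mu>" and mass: "\<And>a c. a < c \<Longrightarrow> stieltjes_mass \<mu> a c = stieltjes_indicator a c m"
  shows "\<mu> = return borel m"
proof -
  interpret real_distribution \<mu> using assms(1) by (rule real_prob_imp_real_distribution)
  define A where "A n = {m - 1 / (real n + 1)<..<m + 1 / (real n + 1)}" for n
  have "measure \<mu> {m - e<..<m + e} = 1" if "e > 0" for e
  proof -
    have "measure \<mu> ({m - e<..<m + e} \<union> {m - e} \<union> {m + e}) =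
        measure \<mu> {m - e<..<m + e} + measure \<mu> {m - e} + measure \<mu> {m + e}"
      using that by (intro finite_measure_Union[THEN trans] arg_cong2[where f="(+)"]) auto
    moreover have "measure \<mu> ({m - e<..<m + e} \<union> {m - e} \<union> {m + e}) \<le> 1" by (rule prob_le_1)
    moreover have "stieltjes_mass \<mu> (m - e) (m + e) = 1"
      using mass[of "m - e" "m + e"] that by (simp add: stieltjes_indicator_def)
    ultimately show ?thesis
      using measure_nonneg[of \<mu> "{m - e}"] measure_nonneg[of \<mu> "{m + e}"]
      unfolding stieltjes_mass_def by linarith
  qed
  then have measure_A_tendsto_1: "(\<lambda>n. measure \<mu> (A n)) \<longlonglongrightarrow> 1" unfolding A_def by simp
  have Inter_A: "(\<Inter>n. A n) = {m}"
  proof (intro set_eqI iffI)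
    fix x assume x: "x \<in> (\<Inter>n. A n)"
    show "x \<in> {m}"
    proof (rule ccontr)
      assume "x \<notin> {m}"
      then obtain n :: nat where "1 / (real n + 1) < \<bar>x - m\<bar>"
        using reals_Archimedean[of "\<bar>x - m\<bar>"] by (auto simp: inverse_eq_divide add.commute)
      moreover have "x \<in> A n" using x by blast
      then have "\<bar>x - m\<bar> < 1 / (real n + 1)" unfolding A_def by (simp add: abs_less_iff)
      ultimately show False by linarith
    qed
  qed (simp add: A_def)
  have decseq: "decseq A"
    unfolding decseq_def A_def
  proof (intro allI impI subsetI)
    fix k n x assume "k \<le> n" "x \<in> {m - 1 / (real n + 1)<..<m + 1 / (real n + 1)}"
    moreover have "1 / (real n + 1) \<le> 1 / (real k + 1)" using \<open>k \<le> n\<close> by (intro divide_left_mono) auto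
    ultimately show "x \<in> {m - 1 / (real k + 1)<..<m + 1 / (real k + 1)}" by auto
  qed
  have "range A \<subseteq> sets \<mu>" by (simp add: A_def image_subset_iff)
  from finite_Lim_measure_decseq[OF this decseq]
  have "(\<lambda>n. measure \<mu> (A n)) \<longlonglongrightarrow> measure \<mu> {m}" by (simp only: Inter_A)
  from this measure_A_tendsto_1 have "prob {m} = 1" by (rule LIMSEQ_unique)
  then show ?thesis by (rule real_prob_eq_return_if_measure_singleton[OF assms(1)])
qed

theorem lemma3p12:
  assumes "\<mu> \<in> class_L" and "unimodal \<mu>"
  shows "(\<exists>a. \<mu> = return borel a) \<or> (\<exists>a t. t > 0 \<and> \<mu> = cauchy_distr a t)"
proof -
  have rp: "real_prob \<mu>" by (rule class_LD(1)[OF assms(1)])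
  obtain c where "unimodal_at \<mu> c" using assms(2) unfolding unimodal_def by blast
  from Im_F_transform_horizontal_invariant[OF assms(1) this]
  obtain b where F: "\<And>z. Im z > 0 \<Longrightarrow> F_transform \<mu> z = z + b"
    using F_transform_eq_add_const[OF assms(1)] by metis
  note mass = stieltjes_mass_if_F_transform_eq_add[OF rp F]
  show ?thesis
  proof (cases "Im b > 0")
    case True
    then have "\<mu> = cauchy_distr (- Re b) (Im b)" using mass by (intro real_prob_eq_cauchy_distr[OF rp]) auto
    then show ?thesis using True by blast
  next
    case False
    then have "\<mu> = return borel (- Re b)" using mass by (intro real_prob_eq_return[OF rp]) auto
    then show ?thesis by blast
  qed
qed

end
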